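(* If $G$ is a split graph, then $\gamma_{\rm i}(G)=\alpha(G)$.
   Context: A graph is split if its vertex set can be partitioned into a clique and an independent set. $\alpha(G)$ is the independence number. Indicated domination game on $G$: two players, Dominator and Staller, alternate. In each round Dominator indicates a vertex $v$ not yet dominated by the vertices previously selected by Staller (a vertex dominates itself and its neighbors), and Staller must select a vertex of the closed neighborhood $N[v]$, adding it to a set $D$. The game ends when $D$ is a dominating set of $G$. Dominator wants to minimize $|D|$ and Staller to maximize it; the size of $D$ under optimal play of both is the indicated domination number $\gamma_{\rm i}(G)$. *)

theory Defs
  imports Main
begin

definition simple_graph :: "'a set \<Rightarrow> ('a \<Rightarrow> 'a \<Rightarrow> bool) \<Rightarrow> bool" where
  "simple_graph V E \<longleftrightarrow> finite V \<and> (\<forall>x y. E x y \<longrightarrow> x \<in> V \<and> y \<in> V)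
     \<and> (\<forall>x y. E x y \<longrightarrow> E y x) \<and> (\<forall>x. \<not> E x x)"

definition is_clique :: "('a \<Rightarrow> 'a \<Rightarrow> bool) \<Rightarrow> 'a set \<Rightarrow> bool" where
  "is_clique E K \<longleftrightarrow> (\<forall>x\<in>K. \<forall>y\<in>K. x \<noteq> y \<longrightarrow> E x y)"

definition is_independent :: "('a \<Rightarrow> 'a \<Rightarrow> bool) \<Rightarrow> 'a set \<Rightarrow> bool" where
  "is_independent E S \<longleftrightarrow> (\<forall>x\<in>S. \<forall>y\<in>S. \<not> E x y)"

definition split_graph :: "'a set \<Rightarrow> ('a \<Rightarrow> 'a \<Rightarrow> bool) \<Rightarrow> bool" where
  "split_graph V E \<longleftrightarrow> (\<exists>K I. K \<union> I = V \<and> K \<inter> I = {} \<and> is_clique E K \<and> is_independent E I)"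

definition independence_number :: "'a set \<Rightarrow> ('a \<Rightarrow> 'a \<Rightarrow> bool) \<Rightarrow> nat" where
  "independence_number V E = Max {card S | S. S \<subseteq> V \<and> is_independent E S}"

definition closed_nbhd :: "'a set \<Rightarrow> ('a \<Rightarrow> 'a \<Rightarrow> bool) \<Rightarrow> 'a \<Rightarrow> 'a set" where
  "closed_nbhd V E v = {u \<in> V. u = v \<or> E v u}"

definition dominated_by :: "('a \<Rightarrow> 'a \<Rightarrow> bool) \<Rightarrow> 'a set \<Rightarrow> 'a \<Rightarrow> bool" where
  "dominated_by E D x \<longleftrightarrow> x \<in> D \<or> (\<exists>d\<in>D. E d x)"

definition dominating :: "'a set \<Rightarrow> ('a \<Rightarrow> 'a \<Rightarrow> bool) \<Rightarrow> 'a set \<Rightarrow> bool" where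
  "dominating V E D \<longleftrightarrow> (\<forall>x\<in>V. dominated_by E D x)"

text \<open>Indicated domination game. \<open>dom_wins V E D k\<close>: from the position in which
Staller has selected the set D, Dominator has a strategy guaranteeing that the game
ends with at most k further selections, whatever Staller does.\<close>
inductive dom_wins :: "'a set \<Rightarrow> ('a \<Rightarrow> 'a \<Rightarrow> bool) \<Rightarrow> 'a set \<Rightarrow> nat \<Rightarrow> bool"
  for V E where
  finished: "dominating V E D \<Longrightarrow> dom_wins V E D k"
| indicate: "\<lbrakk>\<not> dominating V E D; v \<in> V; \<not> dominated_by E D v;
     \<forall>u\<in>closed_nbhd V E v. dom_wins V E (insert u D) k\<rbrakk>
     \<Longrightarrow> dom_wins V E D (Suc k)"

text \<open>The indicated domination number: the size of D under optimal play, i.e. the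
least number of selections Dominator can guarantee from the start of the game.
(The selected vertices are always new, so the number of selections equals |D|.)\<close>
definition indicated_domination_number :: "'a set \<Rightarrow> ('a \<Rightarrow> 'a \<Rightarrow> bool) \<Rightarrow> nat" where
  "indicated_domination_number V E = (LEAST k. dom_wins V E {} k)"

end

theory Submission
  imports Defs
begin

text \<open>Fix a split partition \<open>(K, I)\<close> in which every clique vertex has a neighbour in \<open>I\<close>;
one is obtained from any split partition by moving a clique vertex without neighbours in \<open>I\<close>
over to \<open>I\<close>. An independent set then contains at most one clique vertex \<open>k\<close>, and only
together with vertices of \<open>I\<close> other than a neighbour of \<open>k\<close>, so \<open>\<alpha>(G) = |I|\<close>.
Dominator achieves \<open>|I|\<close> by always indicating an undominated vertex of \<open>I\<close>: once all of \<open>I\<close>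
is dominated, either some clique vertex was chosen or \<open>I\<close> itself was, and both dominate \<open>K\<close>.
Staller achieves \<open>|I|\<close> by always choosing a vertex of \<open>I\<close>, which every closed neighbourhood
contains; since \<open>I\<close> is independent, each choice dominates only one new vertex of \<open>I\<close>.\<close>

definition split_partition :: "'a set \<Rightarrow> ('a \<Rightarrow> 'a \<Rightarrow> bool) \<Rightarrow> 'a set \<Rightarrow> 'a set \<Rightarrow> bool" where
  "split_partition V E K I \<longleftrightarrow>
     K \<union> I = V \<and> K \<inter> I = {} \<and> is_clique E K \<and> is_independent E I"

definition undominated :: "('a \<Rightarrow> 'a \<Rightarrow> bool) \<Rightarrow> 'a set \<Rightarrow> 'a set \<Rightarrow> 'a set" where
  "undominated E D S = {x \<in> S. \<not> dominated_by E D x}"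

lemma simple_graph_finite: "simple_graph V E \<Longrightarrow> finite V"
  by (simp add: simple_graph_def)

lemma simple_graph_sym: "simple_graph V E \<Longrightarrow> E x y \<Longrightarrow> E y x"
  by (simp add: simple_graph_def)

lemma simple_graph_irrefl: "simple_graph V E \<Longrightarrow> \<not> E x x"
  by (simp add: simple_graph_def)

lemma simple_graph_edge_in_vertices: "simple_graph V E \<Longrightarrow> E x y \<Longrightarrow> x \<in> V"
  by (simp add: simple_graph_def)

lemma split_graph_iff_split_partition: "split_graph V E \<longleftrightarrow> (\<exists>K I. split_partition V E K I)"
  by (simp add: split_graph_def split_partition_def)

lemma split_partition_finite_independent:
  "simple_graph V E \<Longrightarrow> split_partition V E K I \<Longrightarrow> finite I"
  by (metis simple_graph_finite split_partition_def finite_Un)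

lemma undominated_empty [simp]: "undominated E {} S = S"
  by (simp add: undominated_def dominated_by_def)

lemma finite_undominated: "finite S \<Longrightarrow> finite (undominated E D S)"
  by (simp add: undominated_def)

lemma split_partition_with_clique_dominated:
  assumes G: "simple_graph V E" and "split_graph V E"
  obtains K I where "split_partition V E K I" and "\<forall>k\<in>K. \<exists>x\<in>I. E k x"
proof -
  obtain K I where KI: "split_partition V E K I"
    using \<open>split_graph V E\<close> split_graph_iff_split_partition by blast
  show thesis
  proof (cases "\<forall>k\<in>K. \<exists>x\<in>I. E k x")
    case True
    with KI that show thesis by blast
  next
    case False
    then obtain k where k: "k \<in> K" "\<forall>x\<in>I. \<not> E k x" by blast
    have "split_partition V E (K - {k}) (insert k I)"
      using KI k simple_graph_sym[OF G] simple_graph_irrefl[OF G]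
      unfolding split_partition_def is_clique_def is_independent_def by (auto 4 3)
    moreover have "\<forall>k'\<in>K - {k}. \<exists>x\<in>insert k I. E k' x"
      using KI k unfolding split_partition_def is_clique_def by blast
    ultimately show thesis by (rule that)
  qed
qed

lemma card_independent_le:
  assumes G: "simple_graph V E" and KI: "split_partition V E K I"
    and nbr: "\<forall>k\<in>K. \<exists>x\<in>I. E k x"
    and S: "S \<subseteq> V" "is_independent E S"
  shows "card S \<le> card I"
proof (cases "S \<inter> K = {}")
  case True
  then have "S \<subseteq> I" using S KI unfolding split_partition_def by blast
  then show ?thesis using split_partition_finite_independent[OF G KI] by (rule card_mono[rotated])
next
  case False
  then obtain k where k: "k \<in> S" "k \<in> K" by blast
  then obtain x where x: "x \<in> I" "E k x" using nbr by blast
  have finI: "finite I" using split_partition_finite_independent[OF G KI] .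
  \<comment> \<open>The other members of \<open>S\<close> are non-neighbours of \<open>k\<close>, hence lie in \<open>I\<close> and differ from \<open>x\<close>.\<close>
  have "S \<subseteq> insert k (I - {x})"
    using S k x KI unfolding split_partition_def is_clique_def is_independent_def by blast
  then have "card S \<le> card (insert k (I - {x}))"
    using finI by (intro card_mono) auto
  also have "\<dots> = card I"
  proof -
    have "k \<notin> I - {x}" using k(2) KI unfolding split_partition_def by blast
    then have "card (insert k (I - {x})) = Suc (card (I - {x}))" using finI by simp
    also have "\<dots> = card I" using x(1) finI by (rule card_Suc_Diff1[rotated])
    finally show ?thesis .
  qed
  finally show ?thesis .
qed

lemma independence_number_eq_card:
  assumes G: "simple_graph V E" and KI: "split_partition V E K I"
    and nbr: "\<forall>k\<in>K. \<exists>x\<in>I. E k x"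
  shows "independence_number V E = card I"
  unfolding independence_number_def
proof (rule Max_eqI)
  show "finite {card S |S. S \<subseteq> V \<and> is_independent E S}"
    using simple_graph_finite[OF G] by simp
  show "card I \<in> {card S |S. S \<subseteq> V \<and> is_independent E S}"
    using KI unfolding split_partition_def by auto
qed (use card_independent_le[OF G KI nbr] in blast)

lemma undominated_empty_imp_dominating:
  assumes G: "simple_graph V E" and KI: "split_partition V E K I"
    and nbr: "\<forall>k\<in>K. \<exists>x\<in>I. E k x"
    and "undominated E D I = {}"
  shows "dominating V E D"
proof -
  have I_dom: "dominated_by E D x" if "x \<in> I" for x
    using assms(4) that unfolding undominated_def by blast
  have "dominated_by E D y" if y: "y \<in> K" for y
  proof (cases "D \<inter> K = {}")
    case True
    obtain x where x: "x \<in> I" "E y x" using nbr y by blast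
    \<comment> \<open>\<open>x\<close> cannot be dominated from \<open>I\<close> (independence) nor from \<open>K\<close> (disjoint from \<open>D\<close>).\<close>
    have "x \<in> D"
      using I_dom[OF x(1)] True x(1) KI simple_graph_edge_in_vertices[OF G]
      unfolding dominated_by_def split_partition_def is_independent_def by blast
    then show ?thesis using x(2) simple_graph_sym[OF G] unfolding dominated_by_def by blast
  next
    case False
    then obtain d where d: "d \<in> D" "d \<in> K" by blast
    then have "y = d \<or> E d y" using y KI unfolding split_partition_def is_clique_def by metis
    then show ?thesis using d(1) unfolding dominated_by_def by blast
  qed
  then show ?thesis
    using I_dom KI unfolding dominating_def split_partition_def by blast
qed

lemma dom_wins_if_card_undominated_le:
  assumes G: "simple_graph V E" and KI: "split_partition V E K I"
    and nbr: "\<forall>k\<in>K. \<exists>x\<in>I. E k x"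
  shows "card (undominated E D I) \<le> n \<Longrightarrow> dom_wins V E D n"
proof (induction n arbitrary: D)
  have finI: "finite I" using split_partition_finite_independent[OF G KI] .
  {
    case 0
    then have "undominated E D I = {}" using finite_undominated[OF finI] by simp
    then show ?case by (intro dom_wins.finished undominated_empty_imp_dominating[OF G KI nbr])
  next
    case (Suc n)
    show ?case
    proof (cases "dominating V E D")
      case True
      then show ?thesis by (rule dom_wins.finished)
    next
      case False
      then obtain x where x: "x \<in> undominated E D I"
        using undominated_empty_imp_dominating[OF G KI nbr] by blast
      show ?thesis
      proof (rule dom_wins.indicate[OF False])
        show "x \<in> V" using x KI unfolding undominated_def split_partition_def by blast
        show "\<not> dominated_by E D x" using x unfolding undominated_def by blast
        show "\<forall>u\<in>closed_nbhd V E x. dom_wins V E (insert u D) n"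
        proof
          fix u assume u: "u \<in> closed_nbhd V E x"
          have "undominated E (insert u D) I \<subseteq> undominated E D I - {x}"
            using u simple_graph_sym[OF G]
            unfolding undominated_def closed_nbhd_def dominated_by_def by auto
          then have "card (undominated E (insert u D) I) \<le> card (undominated E D I - {x})"
            using finite_undominated[OF finI] by (intro card_mono) auto
          also have "\<dots> \<le> n" using x Suc.prems by (simp add: card_Diff_singleton)
          finally show "dom_wins V E (insert u D) n" by (rule Suc.IH)
        qed
      qed
    qed
  }
qed

lemma card_undominated_le_if_dom_wins:
  assumes "finite I" and "I \<subseteq> V" and "is_independent E I"
    and meets: "\<forall>v\<in>V. closed_nbhd V E v \<inter> I \<noteq> {}"
  shows "dom_wins V E D k \<Longrightarrow> card (undominated E D I) \<le> k"
proof (induction rule: dom_wins.induct)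
  case (finished D k)
  then have "undominated E D I = {}"
    using \<open>I \<subseteq> V\<close> unfolding undominated_def dominating_def by blast
  then show ?case by simp
next
  case (indicate D v k)
  obtain u where u: "u \<in> closed_nbhd V E v" "u \<in> I" using meets indicate.hyps(2) by blast
  have "card (undominated E D I) \<le> card (undominated E D I - {u}) + 1"
    by (auto simp: card_Diff_singleton_if)
  also have "card (undominated E D I - {u}) \<le> card (undominated E (insert u D) I)"
    using u(2) \<open>finite I\<close> \<open>is_independent E I\<close>
    by (intro card_mono) (auto simp: undominated_def dominated_by_def is_independent_def)
  also have "\<dots> \<le> k" using indicate.IH u(1) by blast
  finally show ?case by simp
qed

lemma closed_nbhd_meets_independent_side:
  assumes G: "simple_graph V E" and KI: "split_partition V E K I"
    and nbr: "\<forall>k\<in>K. \<exists>x\<in>I. E k x" and "v \<in> V"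
  shows "closed_nbhd V E v \<inter> I \<noteq> {}"
  using assms simple_graph_edge_in_vertices[OF G] simple_graph_sym[OF G]
  unfolding split_partition_def closed_nbhd_def by blast

lemma indicated_domination_number_eq_card:
  assumes G: "simple_graph V E" and KI: "split_partition V E K I"
    and nbr: "\<forall>k\<in>K. \<exists>x\<in>I. E k x"
  shows "indicated_domination_number V E = card I"
  unfolding indicated_domination_number_def
proof (rule Least_equality)
  show "dom_wins V E {} (card I)"
    using dom_wins_if_card_undominated_le[OF G KI nbr, of "{}"] by simp
next
  fix k assume "dom_wins V E {} k"
  moreover have "I \<subseteq> V" "is_independent E I"
    using KI unfolding split_partition_def by auto
  moreover note split_partition_finite_independent[OF G KI]
    closed_nbhd_meets_independent_side[OF G KI nbr]
  ultimately have "card (undominated E {} I) \<le> k"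
    by (intro card_undominated_le_if_dom_wins) auto
  then show "card I \<le> k" by simp
qed

theorem proposition5p1:
  fixes V :: "'a set" and E :: "'a \<Rightarrow> 'a \<Rightarrow> bool"
  assumes "simple_graph V E" and "split_graph V E"
  shows "indicated_domination_number V E = independence_number V E"
proof -
  obtain K I where "split_partition V E K I" and "\<forall>k\<in>K. \<exists>x\<in>I. E k x"
    using split_partition_with_clique_dominated[OF assms] .
  then have "indicated_domination_number V E = card I" and "independence_number V E = card I"
    using assms(1) indicated_domination_number_eq_card independence_number_eq_card by blast+
  then show ?thesis by simp
qed

end
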